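(* Let $M$ be a set of machines and $J$ a set of jobs with $|J|\le|M|^c$. Let $L$ and $l$ be integers with $2|M|^c\ge L\ge C(J)+D(J)$ and $l\ge 150c\ln|M|/\ln\ln|M|$. Then the probability that a uniformly random hash function $h:M^*\times I\to\{0,\dots,L-1\}$ is not $(L,l)$-good for $J$ is at most $\exp(-|J|\ln(l)/8)$.
   Context: Jobs: each job $j$ has a machine sequence $\mathrm{seq}(j)\in M^*$ (finite sequence of machines) and a unique identifier $\mathrm{ind}(j)\in I:=\{1,\dots,|M|^c\}$, where $c\ge1$ is a constant. Standing assumption: $|M|\ge32$. $C(J)=\max_{m\in M}\sum_{j\in J}|\{i:\mathrm{seq}(j)_i=m\}|$, $D(J)=\max_j\mathrm{len}(\mathrm{seq}(j))$. For $h$, write $h(j):=h(\mathrm{seq}(j),\mathrm{ind}(j))$ and $\mathrm{virt}(j,i)=h(j)+i$ for $i<\mathrm{len}(\mathrm{seq}(j))$ ($\infty$ if $i=\mathrm{len}(\mathrm{seq}(j))$). A bad pattern (for $M,L,l,J$) is a collection of sets $B_{T,m}$, for $0\le T<2L$ and $m\in M$, of pairs $(j,i)$ with $j\in J$, such that $\mathrm{seq}(j)_i=m$ for all $(j,i)\in B_{T,m}$; each $j$ appears at most once in $\bigsqcup B_{T,m}$; $|B_{T,m}|\in\{0\}\cup(l,|J|]$ for all $(T,m)$; and $\sum_{T,m}|B_{T,m}|>|J|/2$. It occurs for $h$ if $\mathrm{virt}(j,i)=T$ for all $(T,m)$ and $(j,i)\in B_{T,m}$. $h$ is $(L,l)$-good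 for $J$ if no bad pattern occurs for $h$. *)

theory Defs
  imports "HOL-Probability.Probability"
begin

text \<open>Jobs are elements of an abstract type 'j, described by a machine sequence
  seq j and an identifier ind j. Machines are elements of a finite set M.\<close>

definition idx_set :: "'m set \<Rightarrow> real \<Rightarrow> nat set" where
  "idx_set M c = {i. 1 \<le> i \<and> real i \<le> real (card M) powr c}"

definition occ :: "('j \<Rightarrow> 'm list) \<Rightarrow> 'j \<Rightarrow> 'm \<Rightarrow> nat" where
  "occ seq j m = card {i. i < length (seq j) \<and> seq j ! i = m}"

definition congestion :: "'m set \<Rightarrow> ('j \<Rightarrow> 'm list) \<Rightarrow> 'j set \<Rightarrow> nat" where
  "congestion M seq J = Max ((\<lambda>m. \<Sum>j\<in>J. occ seq j m) ` M)"

definition dilation :: "('j \<Rightarrow> 'm list) \<Rightarrow> 'j set \<Rightarrow> nat" where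
  "dilation seq J = Max (insert 0 ((\<lambda>j. length (seq j)) ` J))"

definition virt :: "('m list \<times> nat \<Rightarrow> nat) \<Rightarrow> ('j \<Rightarrow> 'm list) \<Rightarrow> ('j \<Rightarrow> nat)
    \<Rightarrow> 'j \<Rightarrow> nat \<Rightarrow> enat" where
  "virt h seq ind j i =
     (if i < length (seq j) then enat (h (seq j, ind j) + i) else \<infinity>)"

definition bad_pattern :: "'m set \<Rightarrow> nat \<Rightarrow> nat \<Rightarrow> ('j \<Rightarrow> 'm list) \<Rightarrow> 'j set
    \<Rightarrow> (nat \<Rightarrow> 'm \<Rightarrow> ('j \<times> nat) set) \<Rightarrow> bool" where
  "bad_pattern M L l seq J B \<longleftrightarrow>
     (\<forall>T<2*L. \<forall>m\<in>M. \<forall>(j,i)\<in>B T m. j \<in> J \<and> i < length (seq j) \<and> seq j ! i = m) \<and>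
     (\<forall>T1<2*L. \<forall>m1\<in>M. \<forall>T2<2*L. \<forall>m2\<in>M. \<forall>j i1 i2.
        (j,i1) \<in> B T1 m1 \<longrightarrow> (j,i2) \<in> B T2 m2 \<longrightarrow> T1 = T2 \<and> m1 = m2 \<and> i1 = i2) \<and>
     (\<forall>T<2*L. \<forall>m\<in>M. card (B T m) = 0 \<or> (l < card (B T m) \<and> card (B T m) \<le> card J)) \<and>
     real (\<Sum>T<2*L. \<Sum>m\<in>M. card (B T m)) > real (card J) / 2"

definition pattern_occurs :: "'m set \<Rightarrow> nat \<Rightarrow> ('m list \<times> nat \<Rightarrow> nat) \<Rightarrow> ('j \<Rightarrow> 'm list)
    \<Rightarrow> ('j \<Rightarrow> nat) \<Rightarrow> (nat \<Rightarrow> 'm \<Rightarrow> ('j \<times> nat) set) \<Rightarrow> bool" where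
  "pattern_occurs M L h seq ind B \<longleftrightarrow>
     (\<forall>T<2*L. \<forall>m\<in>M. \<forall>(j,i)\<in>B T m. virt h seq ind j i = enat T)"

definition good :: "'m set \<Rightarrow> nat \<Rightarrow> nat \<Rightarrow> ('m list \<times> nat \<Rightarrow> nat) \<Rightarrow> ('j \<Rightarrow> 'm list)
    \<Rightarrow> ('j \<Rightarrow> nat) \<Rightarrow> 'j set \<Rightarrow> bool" where
  "good M L l h seq ind J \<longleftrightarrow>
     \<not> (\<exists>B. bad_pattern M L l seq J B \<and> pattern_occurs M L h seq ind B)"

definition hash_space :: "'m set \<Rightarrow> real \<Rightarrow> nat \<Rightarrow> ('m list \<times> nat \<Rightarrow> nat) measure" where
  "hash_space M c L = PiM (lists M \<times> idx_set M c) (\<lambda>_. measure_pmf (pmf_of_set {0..<L}))"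

end

theory Submission
  imports Defs
begin

text \<open>If h is not good, some bad pattern occurs. Its nonempty classes B_{T,m} have more than l
  elements and together more than |J|/2, so cutting them into disjoint groups of l + 1 steps yields
  r = |J| div (4(l + 1)) + 1 groups, all of whose steps belong to distinct jobs, and h moves every
  step of a group to the group's slot T. Distinct jobs have distinct keys, so such a family of groups
  is hit with probability L^(-r(l + 1)). Since no machine carries more than C(J) \<le> L steps, there
  are at most 2L|M| L^(l + 1)/(l + 1)! groups, and the union bound over all families gives
  (2L|M|/(l + 1)!)^r. The estimate ln((l + 1)!) \<ge> (l + 1) ln(l + 1) - (l + 1) together with the
  choice of l bounds this by exp(-|J| ln l / 8).\<close>

lemma power_div_fact_le_exp:
  fixes x :: real
  assumes "0 \<le> x"
  shows "x ^ n / fact n \<le> exp x"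
proof -
  have "(\<Sum>k\<in>{n}. x ^ k / fact k) \<le> (\<Sum>k. x ^ k / fact k)"
    using assms exp_converges[of x] by (intro sum_le_suminf) (auto simp: sums_iff divide_inverse mult.commute)
  also have "\<dots> = exp x"
    using exp_converges[of x] by (simp add: sums_iff divide_inverse mult.commute)
  finally show ?thesis by simp
qed

lemma ln_fact_ge: "real n * ln (real n) - real n \<le> ln (fact n)"
proof (cases "n = 0")
  case False
  have "ln (real n ^ n / fact n) \<le> ln (exp (real n))"
    using power_div_fact_le_exp[of "real n" n] False by (subst ln_le_cancel_iff) auto
  then show ?thesis
    using False by (simp add: ln_div ln_realpow)
qed simp

lemma ln_le_half_self:
  fixes y :: real
  assumes "0 < y"
  shows "ln y \<le> y / 2"
proof -
  have "ln y = 2 * ln (sqrt y)"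
    using assms by (simp add: ln_sqrt)
  also have "\<dots> \<le> 2 * (sqrt y - 1)"
    using assms ln_le_minus_one[of "sqrt y"] by simp
  also have "\<dots> \<le> y / 2"
    using assms sum_power2_ge_zero[of "sqrt y - 2" 0] by (simp add: power2_eq_square algebra_simps)
  finally show ?thesis .
qed

lemma ln_ge_two_plus_half_ln:
  fixes x c q :: real
  assumes "1 < x" "1 \<le> c" "150 * c * x / ln x \<le> q"
  shows "2 + ln x / 2 \<le> ln q"
proof -
  have "2 \<le> ln (150 :: real)"
  proof -
    have "exp (2 :: real) = exp 1 * exp 1" by (simp flip: exp_add)
    also have "\<dots> \<le> 3 * 3" using exp_le by (intro mult_mono) auto
    finally show ?thesis by (subst ln_ge_iff) auto
  qed
  moreover have "ln (150 * c * x / ln x) = ln 150 + ln c + ln x - ln (ln x)"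
    using assms(1,2) by (simp add: ln_mult ln_div)
  moreover have "ln (150 * c * x / ln x) \<le> ln q"
    using assms by (subst ln_le_cancel_iff) (auto intro: less_le_trans[OF _ assms(3)])
  moreover have "0 \<le> ln c"
    using assms(2) by simp
  moreover have "ln (ln x) \<le> ln x / 2"
    using assms(1) by (intro ln_le_half_self) simp
  ultimately show ?thesis
    by linarith
qed

lemma ln_group_ratio_le:
  fixes m L l :: nat and c :: real
  assumes "1 < ln (real m)" "1 \<le> c" "0 < L" "real L \<le> 2 * real m powr c"
    and "150 * c * ln m / ln (ln m) \<le> real l"
  shows "ln (2 * real L * real m / fact (Suc l)) \<le> - real (Suc l) * ln (real l) / 2"
proof -
  define x q where "x = ln (real m)" and "q = real (Suc l)"
  have x: "1 < x" and m: "0 < m"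
    using assms(1) by (auto simp: x_def intro: ccontr)
  have q: "150 * c * x / ln x \<le> q"
    using assms(5) by (simp add: x_def q_def)
  have "0 < 150 * c * x / ln x"
    using x assms(2) by simp
  then have l: "0 < real l"
    using assms(5) by (simp add: x_def)
  have "150 * c * x / ln x * (ln x / 4) \<le> q * (ln q / 2 - 1)"
    using ln_ge_two_plus_half_ln[OF x assms(2) q] q x \<open>0 < 150 * c * x / ln x\<close>
    by (intro mult_mono) auto
  then have slack: "150 * (c * x) / 4 \<le> q * ln q / 2 - q"
    using x by (simp add: algebra_simps)
  have "ln (real L) \<le> ln (2 * real m powr c)"
    using m assms(3,4) by (subst ln_le_cancel_iff) auto
  then have lnL: "ln (real L) \<le> ln 2 + c * x"
    using m by (simp add: ln_mult ln_powr x_def)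
  have "ln (2 * real L * real m / fact (Suc l)) = ln 2 + ln (real L) + x - ln (fact (Suc l))"
    using m assms(3) by (simp add: ln_mult ln_div x_def del: fact_Suc)
  also have "\<dots> \<le> 2 * ln 2 + c * x + x - (q * ln q - q)"
    using lnL ln_fact_ge[of "Suc l"] by (simp add: q_def del: fact_Suc)
  also have "\<dots> \<le> - q * ln q / 2"
    using slack x assms(2) ln_le_minus_one[of 2] mult_right_mono[OF assms(2), of x] by linarith
  also have "\<dots> \<le> - q * ln (real l) / 2"
    using l by (simp add: q_def)
  finally show ?thesis
    by (simp add: q_def)
qed

lemma power_le_exp_of_ln_le:
  fixes A a :: real and n q :: nat
  assumes "0 < A" "0 < q" "0 \<le> a" "ln A \<le> - real q * a / 2"
  shows "A ^ (n div (4 * q) + 1) \<le> exp (- real n * a / 8)"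
proof -
  define r where "r = n div (4 * q) + 1"
  have "n \<le> 4 * q * r"
    unfolding r_def using dividend_less_times_div[of "4 * q" n] assms(2) by simp
  then have "real n \<le> 4 * real q * real r"
    unfolding of_nat_le_iff[symmetric, where 'a=real] by simp
  then have r: "real n / (4 * q) \<le> real r"
    using assms(2) by (simp add: divide_le_eq mult.commute)
  have "0 \<le> real q * a"
    using assms(3) by simp
  then have "ln A \<le> 0"
    using assms(4) by linarith
  have "A ^ r = exp (real r * ln A)"
    using assms(1) by (simp add: exp_of_nat_mult)
  also have "\<dots> \<le> exp (real n / (4 * q) * ln A)"
    using mult_right_mono_neg[OF r \<open>ln A \<le> 0\<close>] by simp
  also have "\<dots> \<le> exp (real n / (4 * q) * (- real q * a / 2))"
    unfolding exp_le_cancel_iff by (rule mult_left_mono[OF assms(4)]) simp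
  also have "\<dots> = exp (- real n * a / 8)"
    using assms(2) by (simp add: field_simps)
  finally show ?thesis
    by (simp add: r_def)
qed

lemma group_ratio_power_le_exp:
  fixes m L l n :: nat and c :: real
  assumes "1 < ln (real m)" "1 \<le> c" "real L \<le> 2 * real m powr c"
    and "150 * c * ln m / ln (ln m) \<le> real l"
  shows "(2 * real L * real m / fact (Suc l)) ^ (n div (4 * Suc l) + 1)
    \<le> exp (- real n * ln (real l) / 8)"
proof (cases "L = 0")
  case False
  have "0 < 150 * c * ln m / ln (ln m)"
    using assms(1,2) by simp
  then have "0 < real l"
    using assms(4) by linarith
  moreover have "0 < m"
    using assms(1) by (auto intro: ccontr)
  ultimately show ?thesis
    using False assms ln_group_ratio_le[of m c L l]
    by (intro power_le_exp_of_ln_le) simp_all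
qed simp

lemma finite_subsets_of_card: "finite A \<Longrightarrow> finite {G. G \<subseteq> A \<and> card G = q}"
  by (rule finite_subset[of _ "Pow A"]) auto

lemma le_twice_mult_div:
  fixes a q :: nat
  assumes "0 < q" "q \<le> a"
  shows "a \<le> 2 * q * (a div q)"
proof -
  have "q * 1 \<le> q * (a div q)"
    using assms by (intro mult_le_mono2) (simp add: Suc_le_eq div_greater_zero_iff)
  moreover have "a = q * (a div q) + a mod q"
    by simp
  moreover have "a mod q < q"
    using assms(1) by simp
  ultimately show ?thesis
    unfolding mult.assoc by linarith
qed

lemma obtain_disjoint_subsets_of_card:
  assumes "finite A" "0 < q" "n * q \<le> card A"
  obtains \<P> where "card \<P> = n" "\<forall>G\<in>\<P>. G \<subseteq> A \<and> card G = q" "disjoint \<P>"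
proof -
  have "\<exists>\<P>. card \<P> = n \<and> (\<forall>G\<in>\<P>. G \<subseteq> A \<and> card G = q) \<and> disjoint \<P>"
    using assms(1,3)
  proof (induction n arbitrary: A)
    case 0
    show ?case
      by (intro exI[of _ "{}"]) simp
  next
    case (Suc n)
    obtain G where G: "G \<subseteq> A" "card G = q"
      using obtain_subset_with_card_n[of q A] Suc.prems(2) by auto
    have "n * q \<le> card (A - G)"
      using Suc.prems G by (simp add: card_Diff_subset finite_subset)
    then obtain \<P> where \<P>: "card \<P> = n" "\<forall>G'\<in>\<P>. G' \<subseteq> A - G \<and> card G' = q" "disjoint \<P>"
      using Suc.IH[of "A - G"] Suc.prems(1) by blast
    have "G \<noteq> {}"
      using G(2) assms(2) by auto
    then have "G \<notin> \<P>" and "\<forall>G'\<in>\<P>. disjnt G G'"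
      using \<P>(2) by (auto simp: disjnt_def)
    moreover have "finite \<P>"
      using \<P>(2) Suc.prems(1) by (auto intro: finite_subset[of _ "Pow A"])
    ultimately show ?case
      using \<P> G by (intro exI[of _ "insert G \<P>"]) (auto simp: pairwise_insert disjnt_sym)
  qed
  then show ?thesis
    using that by blast
qed

lemma disjoint_family_on_snd_Sigma:
  assumes "disjoint_family_on S X" "\<And>x. x \<in> X \<Longrightarrow> disjoint (P x)"
    and "\<And>x. x \<in> X \<Longrightarrow> \<Union>(P x) \<subseteq> S x"
  shows "disjoint_family_on snd (SIGMA x:X. P x)"
  unfolding disjoint_family_on_def
proof (intro ballI impI)
  fix g g' assume "g \<in> (SIGMA x:X. P x)" "g' \<in> (SIGMA x:X. P x)" and "g \<noteq> g'"
  then have g: "fst g \<in> X" "snd g \<in> P (fst g)" and g': "fst g' \<in> X" "snd g' \<in> P (fst g')"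
    by (auto simp: mem_Sigma_iff)
  show "snd g \<inter> snd g' = {}"
  proof (cases "fst g = fst g'")
    case True
    then have "snd g \<noteq> snd g'"
      using \<open>g \<noteq> g'\<close> by (simp add: prod_eq_iff)
    then show ?thesis
      using disjointD[OF assms(2)[OF g(1)] g(2)] g'(2) True by simp
  next
    case False
    then have "S (fst g) \<inter> S (fst g') = {}"
      using disjoint_family_onD[OF assms(1) g(1) g'(1)] by blast
    moreover have "snd g \<subseteq> S (fst g)" "snd g' \<subseteq> S (fst g')"
      using assms(3)[OF g(1)] assms(3)[OF g'(1)] g(2) g'(2) by blast+
    ultimately show ?thesis
      by blast
  qed
qed

lemma obtain_disjoint_tagged_subsets_of_card:
  assumes "finite X" "\<And>x. x \<in> X \<Longrightarrow> finite (S x)" "disjoint_family_on S X" "0 < q"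
    and "n \<le> (\<Sum>x\<in>X. card (S x) div q)"
  obtains \<G> where "\<G> \<subseteq> (SIGMA x:X. {G. G \<subseteq> S x \<and> card G = q})" "card \<G> = n"
    "disjoint_family_on snd \<G>"
proof -
  have "\<forall>x\<in>X. \<exists>\<P>. card \<P> = card (S x) div q \<and> (\<forall>G\<in>\<P>. G \<subseteq> S x \<and> card G = q) \<and> disjoint \<P>"
  proof
    fix x assume "x \<in> X"
    show "\<exists>\<P>. card \<P> = card (S x) div q \<and> (\<forall>G\<in>\<P>. G \<subseteq> S x \<and> card G = q) \<and> disjoint \<P>"
      by (rule obtain_disjoint_subsets_of_card[OF assms(2)[OF \<open>x \<in> X\<close>] assms(4) div_times_less_eq_dividend])
        blast
  qed
  then have "\<exists>\<P>. \<forall>x\<in>X. card (\<P> x) = card (S x) div q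
      \<and> (\<forall>G\<in>\<P> x. G \<subseteq> S x \<and> card G = q) \<and> disjoint (\<P> x)"
    by (rule bchoice)
  then obtain \<P> where \<P>: "\<forall>x\<in>X. card (\<P> x) = card (S x) div q
      \<and> (\<forall>G\<in>\<P> x. G \<subseteq> S x \<and> card G = q) \<and> disjoint (\<P> x)" ..
  then have card_\<P>: "card (\<P> x) = card (S x) div q" and disjoint_\<P>: "disjoint (\<P> x)"
    and in_\<P>: "\<And>G. G \<in> \<P> x \<Longrightarrow> G \<subseteq> S x \<and> card G = q" if "x \<in> X" for x
    using that by blast+
  have "finite (\<P> x)" if "x \<in> X" for x
    by (rule finite_subset[of _ "Pow (S x)"]) (use in_\<P>[OF that] assms(2)[OF that] in auto)
  then have "card (SIGMA x:X. \<P> x) = (\<Sum>x\<in>X. card (S x) div q)"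
    using assms(1) card_\<P> by simp
  then obtain \<G> where \<G>: "\<G> \<subseteq> (SIGMA x:X. \<P> x)" "card \<G> = n"
    using assms(5) obtain_subset_with_card_n by metis
  have "disjoint_family_on snd (SIGMA x:X. \<P> x)"
    using assms(3) disjoint_\<P> in_\<P> by (intro disjoint_family_on_snd_Sigma) blast+
  then have "disjoint_family_on snd \<G>"
    using disjoint_family_on_mono[OF \<G>(1)] by blast
  moreover have "\<G> \<subseteq> (SIGMA x:X. {G. G \<subseteq> S x \<and> card G = q})"
    using \<G>(1) in_\<P> by fastforce
  ultimately show ?thesis
    using that \<G>(2) by blast
qed

lemma PiM_pmf_Collect_eq_prod_emb:
  assumes "K \<subseteq> I"
  shows "{h \<in> space (PiM I (\<lambda>_. measure_pmf p)). \<forall>k\<in>K. h k \<in> X k}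
    = prod_emb I (\<lambda>_. measure_pmf p) K (PiE K X)"
  using assms by (auto simp: prod_emb_def space_PiM)

lemma sets_PiM_pmf_Collect:
  assumes "finite K" "K \<subseteq> I"
  shows "{h \<in> space (PiM I (\<lambda>_. measure_pmf p)). \<forall>k\<in>K. h k \<in> X k} \<in> sets (PiM I (\<lambda>_. measure_pmf p))"
  unfolding PiM_pmf_Collect_eq_prod_emb[OF assms(2)] using assms by (intro sets_PiM_I) auto

lemma measure_PiM_pmf_Collect:
  assumes "finite K" "K \<subseteq> I"
  shows "measure (PiM I (\<lambda>_. measure_pmf p)) {h \<in> space (PiM I (\<lambda>_. measure_pmf p)). \<forall>k\<in>K. h k \<in> X k}
    = (\<Prod>k\<in>K. measure (measure_pmf p) (X k))"
proof -
  interpret product_prob_space "\<lambda>_. measure_pmf p" I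
    by (rule product_prob_spaceI) (rule prob_space_measure_pmf)
  show ?thesis
    unfolding PiM_pmf_Collect_eq_prod_emb[OF assms(2)] using assms by (intro measure_PiM_emb) auto
qed

lemma sets_PiM_pmf_Collect_finite_dependence:
  fixes p :: "'a :: countable pmf"
  assumes "finite K" "K \<subseteq> I" and Q: "\<And>h h'. (\<forall>k\<in>K. h k = h' k) \<Longrightarrow> Q h \<longleftrightarrow> Q h'"
  shows "{h \<in> space (PiM I (\<lambda>_. measure_pmf p)). Q h} \<in> sets (PiM I (\<lambda>_. measure_pmf p))"
proof -
  let ?H = "PiM I (\<lambda>_. measure_pmf p)"
  let ?R = "{r \<in> PiE K (\<lambda>_. UNIV). Q r}"
  have "{h \<in> space ?H. Q h} = (\<Union>r\<in>?R. {h \<in> space ?H. \<forall>k\<in>K. h k \<in> {r k}})"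
  proof (intro equalityI subsetI)
    fix h assume "h \<in> {h \<in> space ?H. Q h}"
    then show "h \<in> (\<Union>r\<in>?R. {h \<in> space ?H. \<forall>k\<in>K. h k \<in> {r k}})"
      using Q[of h "restrict h K"] by (intro UN_I[of "restrict h K"]) auto
  next
    fix h assume "h \<in> (\<Union>r\<in>?R. {h \<in> space ?H. \<forall>k\<in>K. h k \<in> {r k}})"
    then obtain r where "r \<in> ?R" "h \<in> space ?H" "\<forall>k\<in>K. h k = r k"
      by auto
    then show "h \<in> {h \<in> space ?H. Q h}"
      using Q[of h r] by simp
  qed
  also have "\<dots> \<in> sets ?H"
  proof (rule sets.countable_UN'')
    show "countable ?R"
      by (rule countable_subset[OF _ countable_PiE[OF assms(1)]]) auto
  qed (rule sets_PiM_pmf_Collect[OF assms(1,2)])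
  finally show ?thesis .
qed

lemma measure_pmf_of_set_subsingleton_le:
  assumes "finite S" "S \<noteq> {}" "\<forall>v\<in>A. \<forall>w\<in>A. v = w"
  shows "measure (measure_pmf (pmf_of_set S)) A \<le> 1 / real (card S)"
proof -
  have "card (S \<inter> A) \<le> Suc 0"
    using assms(1,3) by (subst card_le_Suc0_iff_eq) auto
  then show ?thesis
    using assms(1,2) by (simp add: measure_pmf_of_set divide_right_mono)
qed

lemma measure_PiM_pmf_of_set_Collect_le:
  assumes "finite K" "K \<subseteq> I" "0 < L" "\<And>k. k \<in> K \<Longrightarrow> \<forall>v\<in>X k. \<forall>w\<in>X k. v = w"
  shows "measure (PiM I (\<lambda>_. measure_pmf (pmf_of_set {0..<L})))
      {h \<in> space (PiM I (\<lambda>_. measure_pmf (pmf_of_set {0..<L}))). \<forall>k\<in>K. h k \<in> X k}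
    \<le> (1 / real L) ^ card K"
proof -
  have "measure (PiM I (\<lambda>_. measure_pmf (pmf_of_set {0..<L})))
      {h \<in> space (PiM I (\<lambda>_. measure_pmf (pmf_of_set {0..<L}))). \<forall>k\<in>K. h k \<in> X k}
    = (\<Prod>k\<in>K. measure (measure_pmf (pmf_of_set {0..<L})) (X k))"
    by (rule measure_PiM_pmf_Collect[OF assms(1,2)])
  also have "\<dots> \<le> (\<Prod>k\<in>K. 1 / real L)"
    using measure_pmf_of_set_subsingleton_le[of "{0..<L}"] assms(3,4) by (intro prod_mono) simp
  also have "\<dots> = (1 / real L) ^ card K"
    by simp
  finally show ?thesis .
qed

definition occurrences :: "('j \<Rightarrow> 'm list) \<Rightarrow> 'j set \<Rightarrow> 'm \<Rightarrow> ('j \<times> nat) set" where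
  "occurrences seq J m = (SIGMA j:J. {i. i < length (seq j) \<and> seq j ! i = m})"

lemma finite_occurrences: "finite J \<Longrightarrow> finite (occurrences seq J m)"
  unfolding occurrences_def by (intro finite_SigmaI) auto

lemma card_occurrences_le_congestion:
  assumes "finite M" "finite J" "m \<in> M"
  shows "card (occurrences seq J m) \<le> congestion M seq J"
proof -
  have "card (occurrences seq J m) = (\<Sum>j\<in>J. occ seq j m)"
    unfolding occurrences_def occ_def using assms(2) by (subst card_SigmaI) auto
  also have "\<dots> \<le> congestion M seq J"
    unfolding congestion_def using assms(1,3) by (intro Max_ge) auto
  finally show ?thesis .
qed

text \<open>A slot group ((T, m), G) consists of q steps of jobs in J on machine m, viewed as a
  candidate for the part of a class B_{T,m} of a bad pattern.\<close>

definition slot_groups :: "'m set \<Rightarrow> nat \<Rightarrow> nat \<Rightarrow> ('j \<Rightarrow> 'm list) \<Rightarrow> 'j set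
    \<Rightarrow> ((nat \<times> 'm) \<times> ('j \<times> nat) set) set" where
  "slot_groups M L q seq J =
     (SIGMA (T, m):{..<2 * L} \<times> M. {G. G \<subseteq> occurrences seq J m \<and> card G = q})"

lemma mem_slot_groups:
  "g \<in> slot_groups M L q seq J \<longleftrightarrow> fst (fst g) < 2 * L \<and> snd (fst g) \<in> M
    \<and> snd g \<subseteq> occurrences seq J (snd (fst g)) \<and> card (snd g) = q"
  by (cases g, cases "fst g") (auto simp: slot_groups_def)

lemma finite_slot_groups:
  assumes "finite M" "finite J"
  shows "finite (slot_groups M L q seq J)"
  unfolding slot_groups_def using assms
  by (intro finite_SigmaI) (auto simp: finite_subsets_of_card finite_occurrences)

lemma card_slot_groups_le:
  assumes "finite M" "finite J" "congestion M seq J \<le> L"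
  shows "card (slot_groups M L q seq J) * fact q \<le> 2 * L * card M * L ^ q"
proof -
  have "card (slot_groups M L q seq J) = (\<Sum>(T, m)\<in>{..<2 * L} \<times> M. card (occurrences seq J m) choose q)"
    unfolding slot_groups_def using assms(1,2)
    by (subst card_SigmaI) (auto simp: n_subsets finite_subsets_of_card finite_occurrences intro!: sum.cong)
  then have "card (slot_groups M L q seq J) * fact q
      = (\<Sum>(T, m)\<in>{..<2 * L} \<times> M. (card (occurrences seq J m) choose q) * fact q)"
    by (simp add: sum_distrib_right case_prod_beta)
  also have "\<dots> \<le> (\<Sum>(T, m)\<in>{..<2 * L} \<times> M. L ^ q)"
  proof (intro sum_mono, clarify)
    fix T m assume "m \<in> M"
    then have "card (occurrences seq J m) \<le> L"
      using card_occurrences_le_congestion[OF assms(1,2)] assms(3) by (meson le_trans)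
    then have "card (occurrences seq J m) ^ q \<le> L ^ q"
      by (rule power_mono) simp
    then show "(card (occurrences seq J m) choose q) * fact q \<le> L ^ q"
      by (rule le_trans[OF binomial_fact_pow])
  qed
  also have "\<dots> = 2 * L * card M * L ^ q"
    by (simp add: card_cartesian_product)
  finally show ?thesis .
qed

definition witness_families :: "'m set \<Rightarrow> nat \<Rightarrow> nat \<Rightarrow> nat \<Rightarrow> ('j \<Rightarrow> 'm list) \<Rightarrow> 'j set
    \<Rightarrow> ((nat \<times> 'm) \<times> ('j \<times> nat) set) set set" where
  "witness_families M L q r seq J =
     {\<G>. \<G> \<subseteq> slot_groups M L q seq J \<and> card \<G> = r \<and> disjoint_family_on snd \<G>
       \<and> inj_on fst (\<Union>(snd ` \<G>))}"

definition groups_hit :: "('m list \<times> nat \<Rightarrow> nat) \<Rightarrow> ('j \<Rightarrow> 'm list) \<Rightarrow> ('j \<Rightarrow> nat)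
    \<Rightarrow> ((nat \<times> 'm) \<times> ('j \<times> nat) set) set \<Rightarrow> bool" where
  "groups_hit h seq ind \<G> \<longleftrightarrow> (\<forall>((T, m), G)\<in>\<G>. \<forall>(j, i)\<in>G. h (seq j, ind j) + i = T)"

lemma groups_hitD:
  assumes "groups_hit h seq ind \<G>" "g \<in> \<G>" "a \<in> snd g"
  shows "h (seq (fst a), ind (fst a)) + snd a = fst (fst g)"
  using assms by (cases g, cases "fst g", cases a) (auto simp: groups_hit_def)

lemma card_witness_families_le:
  assumes "finite M" "finite J"
  shows "finite (witness_families M L q r seq J)"
    and "card (witness_families M L q r seq J) \<le> card (slot_groups M L q seq J) ^ r"
proof -
  let ?Gs = "slot_groups M L q seq J"
  have sub: "witness_families M L q r seq J \<subseteq> {\<G>. \<G> \<subseteq> ?Gs \<and> card \<G> = r}"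
    by (auto simp: witness_families_def)
  have fin: "finite ?Gs"
    using assms by (rule finite_slot_groups)
  then show "finite (witness_families M L q r seq J)"
    using sub finite_subset finite_subsets_of_card by blast
  have "card (witness_families M L q r seq J) \<le> card ?Gs choose r"
    using card_mono[OF finite_subsets_of_card[OF fin] sub] by (simp add: n_subsets[OF fin])
  also have "\<dots> \<le> (card ?Gs choose r) * fact r"
    by simp
  also have "\<dots> \<le> card ?Gs ^ r"
    by (rule binomial_fact_pow)
  finally show "card (witness_families M L q r seq J) \<le> card ?Gs ^ r" .
qed

lemma card_witness_families_mult_le:
  assumes "finite M" "finite J" "congestion M seq J \<le> L"
  shows "real (card (witness_families M L q r seq J)) * (1 / real L) ^ (r * q)
    \<le> (2 * real L * real (card M) / fact q) ^ r"
proof -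
  let ?Gs = "slot_groups M L q seq J"
  have Gs: "real (card ?Gs) * fact q \<le> 2 * real L * real (card M) * real L ^ q"
    using card_slot_groups_le[OF assms, of q]
    by (metis (mono_tags) of_nat_fact of_nat_le_iff of_nat_mult of_nat_numeral of_nat_power)
  have "real (card (witness_families M L q r seq J)) * (1 / real L) ^ (r * q)
      \<le> real (card ?Gs) ^ r * (1 / real L) ^ (r * q)"
    using card_witness_families_le(2)[OF assms(1,2)] by (intro mult_right_mono) (simp_all flip: of_nat_le_iff)
  also have "\<dots> = (real (card ?Gs) / real L ^ q) ^ r"
    by (simp add: power_mult power_divide power_mult_distrib mult.commute flip: power_mult_distrib)
  also have "\<dots> \<le> (2 * real L * real (card M) / fact q) ^ r"
  proof (rule power_mono)
    show "real (card ?Gs) / real L ^ q \<le> 2 * real L * real (card M) / fact q"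
    proof (cases "L = 0")
      case False
      then show ?thesis
        using Gs by (simp add: divide_simps mult.commute mult.left_commute)
    qed (simp add: slot_groups_def)
  qed simp
  finally show ?thesis .
qed

lemma pattern_occurs_cong:
  assumes "bad_pattern M L l seq J B" "pattern_occurs M L h seq ind B"
    and "\<forall>j\<in>J. h (seq j, ind j) = h' (seq j, ind j)"
  shows "pattern_occurs M L h' seq ind B"
  unfolding pattern_occurs_def
proof (intro allI impI ballI, clarify)
  fix T m j i assume Tm: "T < 2 * L" "m \<in> M" and ji: "(j, i) \<in> B T m"
  have "\<forall>(j, i)\<in>B T m. j \<in> J" "\<forall>(j, i)\<in>B T m. virt h seq ind j i = enat T"
    using assms(1,2) Tm unfolding bad_pattern_def pattern_occurs_def by blast+
  then have "j \<in> J" "virt h seq ind j i = enat T"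
    using ji by blast+
  then show "virt h' seq ind j i = enat T"
    using assms(3) by (simp add: virt_def split: if_splits)
qed

lemma good_cong:
  assumes "\<forall>j\<in>J. h (seq j, ind j) = h' (seq j, ind j)"
  shows "good M L l h seq ind J \<longleftrightarrow> good M L l h' seq ind J"
  using pattern_occurs_cong[of M L l seq J _ h ind h'] pattern_occurs_cong[of M L l seq J _ h' ind h] assms
  unfolding good_def by auto

lemma bad_pattern_many_groups:
  assumes "bad_pattern M L l seq J B" "finite M"
  shows "card J div (4 * Suc l) + 1 \<le> (\<Sum>(T, m)\<in>{..<2 * L} \<times> M. card (B T m) div Suc l)"
proof -
  let ?q = "Suc l" and ?X = "{..<2 * L} \<times> M"
  have each: "card (B T m) \<le> 2 * ?q * (card (B T m) div ?q)" if "T < 2 * L" "m \<in> M" for T m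
  proof -
    have "card (B T m) = 0 \<or> l < card (B T m)"
      using assms(1) that unfolding bad_pattern_def by blast
    then show ?thesis
      using le_twice_mult_div[of ?q "card (B T m)"] by auto
  qed
  have "real (card J) / 2 < real (\<Sum>T<2 * L. \<Sum>m\<in>M. card (B T m))"
    using assms(1) unfolding bad_pattern_def by blast
  then have "real (card J) < real (2 * (\<Sum>T<2 * L. \<Sum>m\<in>M. card (B T m)))"
    by simp
  then have "card J < 2 * (\<Sum>(T, m)\<in>?X. card (B T m))"
    by (simp only: of_nat_less_iff sum.cartesian_product)
  also have "\<dots> \<le> 2 * (\<Sum>(T, m)\<in>?X. 2 * ?q * (card (B T m) div ?q))"
    using each by (intro mult_left_mono sum_mono) auto
  also have "\<dots> = (\<Sum>(T, m)\<in>?X. card (B T m) div ?q) * (4 * ?q)"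
    by (simp add: sum_distrib_left case_prod_beta algebra_simps)
  finally show ?thesis
    by (simp add: div_less_iff_less_mult Suc_le_eq)
qed

lemma bad_pattern_slot_subset:
  assumes "bad_pattern M L l seq J B" "x \<in> {..<2 * L} \<times> M"
  shows "case_prod B x \<subseteq> occurrences seq J (snd x)"
  using assms unfolding bad_pattern_def occurrences_def by (cases x) fastforce

lemma bad_pattern_slot_unique:
  assumes "bad_pattern M L l seq J B" "x \<in> {..<2 * L} \<times> M" "x' \<in> {..<2 * L} \<times> M"
    and "(j, i) \<in> case_prod B x" "(j, i') \<in> case_prod B x'"
  shows "x = x' \<and> i = i'"
proof -
  obtain T m T' m' where "x = (T, m)" "x' = (T', m')"
    by fastforce
  then show ?thesis
    using assms unfolding bad_pattern_def by blast
qed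

lemma bad_pattern_groups_in_witness_families:
  assumes bad: "bad_pattern M L l seq J B"
    and \<G>: "\<G> \<subseteq> (SIGMA x:{..<2 * L} \<times> M. {G. G \<subseteq> case_prod B x \<and> card G = q})"
    and "card \<G> = r" "disjoint_family_on snd \<G>"
  shows "\<G> \<in> witness_families M L q r seq J"
proof -
  have in_B: "fst g \<in> {..<2 * L} \<times> M" "snd g \<subseteq> case_prod B (fst g)" "card (snd g) = q"
    if "g \<in> \<G>" for g
    using subsetD[OF \<G> that] by (cases g, simp)+
  have "\<G> \<subseteq> slot_groups M L q seq J"
  proof
    fix g assume g: "g \<in> \<G>"
    have "snd g \<subseteq> occurrences seq J (snd (fst g))"
      using in_B(2)[OF g] bad_pattern_slot_subset[OF bad in_B(1)[OF g]] by (rule order_trans)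
    then show "g \<in> slot_groups M L q seq J"
      using in_B[OF g] by (simp add: mem_slot_groups mem_Times_iff)
  qed
  moreover have "inj_on fst (\<Union>(snd ` \<G>))"
  proof (rule inj_onI)
    fix a b assume "a \<in> \<Union>(snd ` \<G>)" "b \<in> \<Union>(snd ` \<G>)" and ab: "fst a = fst b"
    then obtain g g' where g: "g \<in> \<G>" "a \<in> snd g" and g': "g' \<in> \<G>" "b \<in> snd g'"
      by blast
    have "(fst a, snd a) \<in> case_prod B (fst g)"
      using subsetD[OF in_B(2)[OF g(1)] g(2)] by simp
    moreover have "(fst a, snd b) \<in> case_prod B (fst g')"
      using subsetD[OF in_B(2)[OF g'(1)] g'(2)] ab by (metis prod.collapse)
    ultimately have "snd a = snd b"
      by (rule bad_pattern_slot_unique[OF bad in_B(1)[OF g(1)] in_B(1)[OF g'(1)], THEN conjunct2])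
    then show "a = b"
      using ab by (simp add: prod_eq_iff)
  qed
  ultimately show ?thesis
    using assms(3,4) by (simp add: witness_families_def)
qed

lemma pattern_occurs_groups_hit:
  assumes bad: "bad_pattern M L l seq J B" and occurs: "pattern_occurs M L h seq ind B"
    and \<G>: "\<G> \<subseteq> (SIGMA x:{..<2 * L} \<times> M. {G. G \<subseteq> case_prod B x \<and> card G = q})"
  shows "groups_hit h seq ind \<G>"
  unfolding groups_hit_def
proof clarify
  fix T m G j i assume "((T, m), G) \<in> \<G>" "(j, i) \<in> G"
  then have Tm: "T < 2 * L" "m \<in> M" and ji: "(j, i) \<in> B T m"
    using \<G> by auto
  then have "\<forall>(j, i)\<in>B T m. virt h seq ind j i = enat T"
    using occurs unfolding pattern_occurs_def by blast
  then have "virt h seq ind j i = enat T"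
    using ji by blast
  moreover have "i < length (seq j)"
    using bad_pattern_slot_subset[OF bad, of "(T, m)"] Tm ji by (auto simp: occurrences_def)
  ultimately show "h (seq j, ind j) + i = T"
    by (simp add: virt_def)
qed

lemma not_good_obtain_witness:
  assumes "finite M" "finite J" "\<not> good M L l h seq ind J"
  obtains \<G> where "\<G> \<in> witness_families M L (Suc l) (card J div (4 * Suc l) + 1) seq J"
    "groups_hit h seq ind \<G>"
proof -
  obtain B where bad: "bad_pattern M L l seq J B" and occurs: "pattern_occurs M L h seq ind B"
    using assms(3) unfolding good_def by blast
  let ?X = "{..<2 * L} \<times> M"
  have "finite ?X"
    using assms(1) by simp
  moreover have "finite (case_prod B x)" if "x \<in> ?X" for x
    using bad_pattern_slot_subset[OF bad that] finite_occurrences[OF assms(2)] by (rule finite_subset)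
  moreover have "disjoint_family_on (case_prod B) ?X"
    unfolding disjoint_family_on_def using bad_pattern_slot_unique[OF bad] by fast
  moreover have "card J div (4 * Suc l) + 1 \<le> (\<Sum>x\<in>?X. card (case_prod B x) div Suc l)"
    using bad_pattern_many_groups[OF bad assms(1)] by (simp add: case_prod_unfold)
  ultimately obtain \<G> where \<G>: "\<G> \<subseteq> (SIGMA x:?X. {G. G \<subseteq> case_prod B x \<and> card G = Suc l})"
    "card \<G> = card J div (4 * Suc l) + 1" "disjoint_family_on snd \<G>"
    using obtain_disjoint_tagged_subsets_of_card[of ?X "case_prod B" "Suc l"] by blast
  show ?thesis
    using that bad_pattern_groups_in_witness_families[OF bad \<G>] pattern_occurs_groups_hit[OF bad occurs \<G>(1)]
    by blast
qed

lemma witness_family_steps: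
  assumes "finite M" "finite J" "\<G> \<in> witness_families M L q r seq J"
  shows "\<Union>(snd ` \<G>) \<subseteq> J \<times> UNIV" and "finite (\<Union>(snd ` \<G>))" and "card (\<Union>(snd ` \<G>)) = r * q"
proof -
  have \<G>: "\<G> \<subseteq> slot_groups M L q seq J" "card \<G> = r" "disjoint_family_on snd \<G>"
    using assms(3) by (auto simp: witness_families_def)
  have steps: "snd g \<subseteq> occurrences seq J (snd (fst g)) \<and> card (snd g) = q" if "g \<in> \<G>" for g
    using subsetD[OF \<G>(1) that] by (simp add: mem_slot_groups)
  have "occurrences seq J m \<subseteq> J \<times> UNIV" for m
    by (auto simp: occurrences_def)
  then show "\<Union>(snd ` \<G>) \<subseteq> J \<times> UNIV"
    using steps by blast
  have fin: "finite (snd g)" if "g \<in> \<G>" for g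
    using steps[OF that] finite_occurrences[OF assms(2)] by (meson finite_subset)
  moreover have "finite \<G>"
    by (rule finite_subset[OF \<G>(1) finite_slot_groups[OF assms(1,2)]])
  ultimately show "finite (\<Union>(snd ` \<G>))"
    by (intro finite_UN_I)
  have "card (\<Union>(snd ` \<G>)) = (\<Sum>g\<in>\<G>. card (snd g))"
    using \<open>finite \<G>\<close> fin \<G>(3) by (intro card_UN_disjoint) (auto simp: disjoint_family_on_def)
  also have "\<dots> = r * q"
    using steps \<G>(2) by simp
  finally show "card (\<Union>(snd ` \<G>)) = r * q" .
qed

lemma witness_family_keys_unique:
  assumes "inj_on (\<lambda>j. (seq j, ind j)) J" "finite M" "finite J"
    and W: "\<G> \<in> witness_families M L q r seq J"
    and g: "g \<in> \<G>" "a \<in> snd g" and g': "g' \<in> \<G>" "a' \<in> snd g'"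
    and "(seq (fst a), ind (fst a)) = (seq (fst a'), ind (fst a'))"
  shows "g = g' \<and> a = a'"
proof -
  have inj_fst: "inj_on fst (\<Union>(snd ` \<G>))" and disj: "disjoint_family_on snd \<G>"
    using W by (simp_all add: witness_families_def)
  have "a \<in> \<Union>(snd ` \<G>)" "a' \<in> \<Union>(snd ` \<G>)"
    using g g' by blast+
  moreover from this have "fst a \<in> J" "fst a' \<in> J"
    using witness_family_steps(1)[OF assms(2,3) W] by auto
  ultimately have "a = a'"
    using inj_onD[OF assms(1) assms(9)] inj_onD[OF inj_fst] by blast
  moreover have "g = g'"
  proof (rule ccontr)
    assume "g \<noteq> g'"
    then have "snd g \<inter> snd g' = {}"
      using disjoint_family_onD[OF disj g(1) g'(1)] by blast
    then show False
      using \<open>a = a'\<close> g(2) g'(2) by blast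
  qed
  ultimately show ?thesis
    by blast
qed

definition slot_targets :: "('j \<Rightarrow> 'm list) \<Rightarrow> ('j \<Rightarrow> nat) \<Rightarrow> ((nat \<times> 'm) \<times> ('j \<times> nat) set) set
    \<Rightarrow> 'm list \<times> nat \<Rightarrow> nat set" where
  "slot_targets seq ind \<G> k =
     {v. \<exists>g\<in>\<G>. \<exists>a\<in>snd g. (seq (fst a), ind (fst a)) = k \<and> v + snd a = fst (fst g)}"

lemma groups_hit_imp_slot_targets:
  assumes "groups_hit h seq ind \<G>" "a \<in> \<Union>(snd ` \<G>)"
  shows "h (seq (fst a), ind (fst a)) \<in> slot_targets seq ind \<G> (seq (fst a), ind (fst a))"
  using assms groups_hitD unfolding slot_targets_def by blast

lemma slot_targets_subsingleton:
  assumes "inj_on (\<lambda>j. (seq j, ind j)) J" "finite M" "finite J"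
    and W: "\<G> \<in> witness_families M L q r seq J"
    and "v \<in> slot_targets seq ind \<G> k" "w \<in> slot_targets seq ind \<G> k"
  shows "v = w"
proof -
  obtain g a g' a' where "g \<in> \<G>" "a \<in> snd g" "(seq (fst a), ind (fst a)) = k" "v + snd a = fst (fst g)"
    and "g' \<in> \<G>" "a' \<in> snd g'" "(seq (fst a'), ind (fst a')) = k" "w + snd a' = fst (fst g')"
    using assms(5,6) unfolding slot_targets_def by blast
  then show "v = w"
    using witness_family_keys_unique[OF assms(1-3) W, of g a g' a'] by auto
qed

lemma measure_groups_hit_le:
  fixes seq :: "'j \<Rightarrow> 'm list" and ind :: "'j \<Rightarrow> nat"
  assumes "finite M" "finite J" "\<forall>j\<in>J. (seq j, ind j) \<in> I" "inj_on (\<lambda>j. (seq j, ind j)) J"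
    and W: "\<G> \<in> witness_families M L q r seq J"
  defines "H \<equiv> PiM I (\<lambda>_. measure_pmf (pmf_of_set {0..<L}))"
  shows "measure H {h \<in> space H. groups_hit h seq ind \<G>} \<le> (1 / real L) ^ (r * q)"
proof -
  interpret H: prob_space H
    unfolding H_def by (intro prob_space_PiM prob_space_measure_pmf)
  define key where "key a = (seq (fst a), ind (fst a))" for a :: "'j \<times> nat"
  define U where "U = \<Union>(snd ` \<G>)"
  have UJ: "U \<subseteq> J \<times> UNIV" and finU: "finite U" and cardU: "card U = r * q"
    unfolding U_def using witness_family_steps[OF assms(1,2) W] by auto
  txt \<open>For L = 0 the distribution pmf_of_set {0..<L} is junk, but then the family is empty.\<close>
  show ?thesis
  proof (cases "U = {}")
    case True
    then have "r * q = 0"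
      using cardU by simp
    then show ?thesis
      using H.prob_le_1 by (simp only: power_0)
  next
    case False
    then have "0 < L"
      using W unfolding U_def by (auto simp: witness_families_def mem_slot_groups)
    have inj: "inj_on key U"
    proof (rule inj_onI)
      fix a b assume "a \<in> U" "b \<in> U" "key a = key b"
      then obtain g g' where "g \<in> \<G>" "a \<in> snd g" "g' \<in> \<G>" "b \<in> snd g'"
        unfolding U_def by blast
      then show "a = b"
        using witness_family_keys_unique[OF assms(4,1,2) W] \<open>key a = key b\<close> unfolding key_def by blast
    qed
    have KI: "key ` U \<subseteq> I"
      using UJ assms(3) by (auto simp: key_def)
    have "{h \<in> space H. groups_hit h seq ind \<G>}
        \<subseteq> {h \<in> space H. \<forall>k\<in>key ` U. h k \<in> slot_targets seq ind \<G> k}"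
      using groups_hit_imp_slot_targets unfolding U_def key_def by blast
    then have "measure H {h \<in> space H. groups_hit h seq ind \<G>}
        \<le> measure H {h \<in> space H. \<forall>k\<in>key ` U. h k \<in> slot_targets seq ind \<G> k}"
      using sets_PiM_pmf_Collect[OF finite_imageI[OF finU] KI]
      unfolding H_def by (rule H.finite_measure_mono[unfolded H_def])
    also have "\<dots> \<le> (1 / real L) ^ card (key ` U)"
      unfolding H_def using slot_targets_subsingleton[OF assms(4,1,2) W]
      by (intro measure_PiM_pmf_of_set_Collect_le[OF finite_imageI[OF finU] KI \<open>0 < L\<close>]) blast
    finally show ?thesis
      using card_image[OF inj] cardU by simp
  qed
qed

lemma sets_not_good:
  fixes seq :: "'j \<Rightarrow> 'm list" and ind :: "'j \<Rightarrow> nat" and L :: nat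
  assumes "finite J" "\<forall>j\<in>J. (seq j, ind j) \<in> I"
  defines "H \<equiv> PiM I (\<lambda>_. measure_pmf (pmf_of_set {0..<L}))"
  shows "{h \<in> space H. \<not> good M L l h seq ind J} \<in> sets H"
  unfolding H_def
proof (rule sets_PiM_pmf_Collect_finite_dependence)
  show "finite ((\<lambda>j. (seq j, ind j)) ` J)" "(\<lambda>j. (seq j, ind j)) ` J \<subseteq> I"
    using assms(1,2) by auto
  fix h h' :: "'m list \<times> nat \<Rightarrow> nat"
  assume "\<forall>k\<in>(\<lambda>j. (seq j, ind j)) ` J. h k = h' k"
  then show "(\<not> good M L l h seq ind J) \<longleftrightarrow> (\<not> good M L l h' seq ind J)"
    using good_cong[of J h seq ind h'] by simp
qed

lemma sets_groups_hit:
  fixes seq :: "'j \<Rightarrow> 'm list" and ind :: "'j \<Rightarrow> nat"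
  assumes "finite M" "finite J" "\<forall>j\<in>J. (seq j, ind j) \<in> I"
    and W: "\<G> \<in> witness_families M L q r seq J"
  defines "H \<equiv> PiM I (\<lambda>_. measure_pmf (pmf_of_set {0..<L}))"
  shows "{h \<in> space H. groups_hit h seq ind \<G>} \<in> sets H"
  unfolding H_def
proof (rule sets_PiM_pmf_Collect_finite_dependence)
  let ?K = "(\<lambda>a. (seq (fst a), ind (fst a))) ` \<Union>(snd ` \<G>)"
  show "finite ?K" "?K \<subseteq> I"
    using witness_family_steps[OF assms(1,2) W] assms(3) by auto
  fix h h' :: "'m list \<times> nat \<Rightarrow> nat"
  assume "\<forall>k\<in>?K. h k = h' k"
  then show "groups_hit h seq ind \<G> \<longleftrightarrow> groups_hit h' seq ind \<G>"
    unfolding groups_hit_def by fastforce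
qed

lemma measure_not_good_le:
  fixes seq :: "'j \<Rightarrow> 'm list" and ind :: "'j \<Rightarrow> nat" and L l :: nat
  assumes "finite M" "finite J" "\<forall>j\<in>J. (seq j, ind j) \<in> I" "inj_on (\<lambda>j. (seq j, ind j)) J"
  defines "H \<equiv> PiM I (\<lambda>_. measure_pmf (pmf_of_set {0..<L}))"
    and "r \<equiv> card J div (4 * Suc l) + 1"
  shows "measure H {h \<in> space H. \<not> good M L l h seq ind J}
    \<le> real (card (witness_families M L (Suc l) r seq J)) * (1 / real L) ^ (r * Suc l)"
proof -
  let ?W = "witness_families M L (Suc l) r seq J"
  let ?E = "\<lambda>\<G>. {h \<in> space H. groups_hit h seq ind \<G>}"
  interpret H: prob_space H
    unfolding H_def by (intro prob_space_PiM prob_space_measure_pmf)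
  have fin: "finite ?W"
    by (rule card_witness_families_le(1)[OF assms(1,2)])
  have E: "?E \<G> \<in> sets H" if "\<G> \<in> ?W" for \<G>
    unfolding H_def by (rule sets_groups_hit[OF assms(1-3) that])
  have "{h \<in> space H. \<not> good M L l h seq ind J} \<subseteq> (\<Union>\<G>\<in>?W. ?E \<G>)"
  proof
    fix h assume h: "h \<in> {h \<in> space H. \<not> good M L l h seq ind J}"
    then obtain \<G> where "\<G> \<in> ?W" "groups_hit h seq ind \<G>"
      using not_good_obtain_witness[OF assms(1,2), of L l h seq ind] unfolding r_def by blast
    then show "h \<in> (\<Union>\<G>\<in>?W. ?E \<G>)"
      using h by blast
  qed
  then have "measure H {h \<in> space H. \<not> good M L l h seq ind J} \<le> measure H (\<Union>\<G>\<in>?W. ?E \<G>)"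
    by (rule H.finite_measure_mono[OF _ sets.finite_UN[OF fin E]])
  also have "\<dots> \<le> (\<Sum>\<G>\<in>?W. measure H (?E \<G>))"
    by (rule measure_UNION_le[OF fin E])
  also have "\<dots> \<le> (\<Sum>\<G>\<in>?W. (1 / real L) ^ (r * Suc l))"
  proof (rule sum_mono)
    fix \<G> assume "\<G> \<in> ?W"
    then show "measure H (?E \<G>) \<le> (1 / real L) ^ (r * Suc l)"
      unfolding H_def by (rule measure_groups_hit_le[OF assms(1-4)])
  qed
  finally show ?thesis
    by simp
qed

theorem lemma5p15:
  fixes M :: "'m set" and J :: "'j set" and seq :: "'j \<Rightarrow> 'm list" and ind :: "'j \<Rightarrow> nat"
    and c :: real and L l :: nat
  assumes "finite M" and "card M \<ge> 32" and "c \<ge> 1"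
    and "finite J"
    and "\<forall>j\<in>J. set (seq j) \<subseteq> M"
    and "\<forall>j\<in>J. ind j \<in> idx_set M c"
    and "inj_on ind J"
    and "real (card J) \<le> real (card M) powr c"
    and "real L \<le> 2 * real (card M) powr c"
    and "L \<ge> congestion M seq J + dilation seq J"
    and "real l \<ge> 150 * c * ln (card M) / ln (ln (card M))"
  shows "{h \<in> space (hash_space M c L). \<not> good M L l h seq ind J} \<in> sets (hash_space M c L)
    \<and> measure (hash_space M c L) {h \<in> space (hash_space M c L). \<not> good M L l h seq ind J}
        \<le> exp (- real (card J) * ln (real l) / 8)"
proof -
  let ?H = "hash_space M c L" and ?r = "card J div (4 * Suc l) + 1"
  let ?Bad = "{h \<in> space ?H. \<not> good M L l h seq ind J}"
  define I where "I = lists M \<times> idx_set M c"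
  have H: "?H = PiM I (\<lambda>_. measure_pmf (pmf_of_set {0..<L}))"
    by (simp add: hash_space_def I_def)
  have keys: "\<forall>j\<in>J. (seq j, ind j) \<in> I" and inj: "inj_on (\<lambda>j. (seq j, ind j)) J"
    using assms(5-7) by (auto simp: I_def inj_on_def)
  have "exp 1 < real (card M)"
    using exp_le assms(2) by linarith
  then have ln_M: "1 < ln (real (card M))"
    using ln_less_cancel_iff[of "exp 1" "real (card M)"] assms(2) by simp
  show ?thesis
  proof
    show "?Bad \<in> sets ?H"
      unfolding H by (rule sets_not_good[OF assms(4) keys])
    have "measure ?H ?Bad
        \<le> real (card (witness_families M L (Suc l) ?r seq J)) * (1 / real L) ^ (?r * Suc l)"
      unfolding H by (rule measure_not_good_le[OF assms(1,4) keys inj])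
    also have "\<dots> \<le> (2 * real L * real (card M) / fact (Suc l)) ^ ?r"
      using order_trans[OF le_add1 assms(10)] by (rule card_witness_families_mult_le[OF assms(1,4)])
    also have "\<dots> \<le> exp (- real (card J) * ln (real l) / 8)"
      by (rule group_ratio_power_le_exp[OF ln_M assms(3,9,11)])
    finally show "measure ?H ?Bad \<le> exp (- real (card J) * ln (real l) / 8)" .
  qed
qed

end
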